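(* Let $0<q<1$, $0\le p<1$, and \[ \beta_n=\frac{q(1-q^n)(1-pq^n)}{(1+q-(1+p)q^n)(1+q-(1+p)q^{n+1})},\quad n\ge1. \] Then the continued fraction \[ 1-\cfrac{\beta_1}{1-\cfrac{\beta_2}{1-\cfrac{\beta_3}{1-\dotsb}}} \] converges and has the value \[ \frac{q}{1-pq}\frac{\Delta_0}{\Delta_1}=\frac{q(1-p)(pq^2;q)_\infty}{(pq;q)_\infty-(q;q)_\infty}. \] More generally, for every $k\ge0$, the continued fraction \[ 1-\cfrac{\beta_{k+1}}{1-\cfrac{\beta_{k+2}}{1-\cfrac{\beta_{k+3}}{1-\dotsb}}} \] has the value $\dfrac{q}{1+q-(1+p)q^{k+1}}\dfrac{\Delta_{k}}{\Delta_{k+1}}$.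
   Context: $(a;q)_n=\prod_{k=1}^n(1-aq^{k-1})$ for $n\in\{0,1,\dots\}\cup\{\infty\}$, and $\Delta_n=(pq^n;q)_\infty-(q^n;q)_\infty$ for $n\ge0$. The value of the continued fraction is the limit of its finite approximants. *)

theory Defs
  imports "HOL-Analysis.Analysis"
begin

definition qpoch_inf :: "real \<Rightarrow> real \<Rightarrow> real" where
  "qpoch_inf a q = (\<Prod>k. 1 - a * q ^ k)"

definition Delta :: "real \<Rightarrow> real \<Rightarrow> nat \<Rightarrow> real" where
  "Delta p q n = qpoch_inf (p * q ^ n) q - qpoch_inf (q ^ n) q"

definition beta :: "real \<Rightarrow> real \<Rightarrow> nat \<Rightarrow> real" where
  "beta p q n = q * (1 - q ^ n) * (1 - p * q ^ n) /
     ((1 + q - (1 + p) * q ^ n) * (1 + q - (1 + p) * q ^ (n + 1)))"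

text \<open>Finite approximants of 1 - b 0/(1 - b 1/(1 - ...)):
  cfrac b n = 1 - b 0/(1 - b 1/(... (1 - b (n-1)))), cfrac b 0 = 1.\<close>
fun cfrac :: "(nat \<Rightarrow> real) \<Rightarrow> nat \<Rightarrow> real" where
  "cfrac b 0 = 1"
| "cfrac b (Suc n) = 1 - b 0 / cfrac (\<lambda>i. b (Suc i)) n"

end

theory Submission
  imports Defs
begin

text \<open>Put \<open>\<gamma>\<^sub>n = 1 + q - (1 + p) q\<^sup>n\<close> and \<open>G\<^sub>k = q \<Delta>\<^sub>k / (\<gamma>\<^sub>k\<^sub>+\<^sub>1 \<Delta>\<^sub>k\<^sub>+\<^sub>1)\<close>.
  From \<open>(a;q)\<^sub>\<infinity> = (1 - a)(aq;q)\<^sub>\<infinity>\<close> one gets the three-term recurrence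
  \<open>q \<Delta>\<^sub>n = \<gamma>\<^sub>n\<^sub>+\<^sub>1 \<Delta>\<^sub>n\<^sub>+\<^sub>1 - (1 - q\<^sup>n\<^sup>+\<^sup>1)(1 - pq\<^sup>n\<^sup>+\<^sup>1) \<Delta>\<^sub>n\<^sub>+\<^sub>2\<close>, i.e.
  \<open>G\<^sub>k = 1 - \<beta>\<^sub>k\<^sub>+\<^sub>1 / G\<^sub>k\<^sub>+\<^sub>1\<close>, and all \<open>G\<^sub>k\<close> are positive.
  For any positive solution \<open>t\<close> of \<open>t\<^sub>j = 1 - b\<^sub>j / t\<^sub>j\<^sub>+\<^sub>1\<close> with \<open>b\<^sub>j \<ge> 0\<close>, the
  \<open>n\<close>-th approximant lies between \<open>t\<^sub>0\<close> and \<open>t\<^sub>0 + \<Prod>\<^sub>j\<^sub><\<^sub>n b\<^sub>j / t\<^sub>j\<^sub>+\<^sub>1\<^sup>2\<close>.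
  Here \<open>\<beta>\<^sub>m / G\<^sub>m\<^sup>2 \<le> \<gamma>\<^sub>m\<^sub>+\<^sub>1 \<Delta>\<^sub>m\<^sub>+\<^sub>1\<^sup>2 / (q \<gamma>\<^sub>m \<Delta>\<^sub>m\<^sup>2)\<close>, so the product telescopes,
  and since \<open>\<Delta>\<^sub>m = O(q\<^sup>m)\<close> it is \<open>O(q\<^sup>n)\<close>.\<close>

lemma convergent_prod_qpoch:
  fixes a q :: real
  assumes "\<bar>q\<bar> < 1"
  shows "convergent_prod (\<lambda>k. 1 - a * q ^ k)"
proof -
  have "summable (\<lambda>k. norm ((1 - a * q ^ k) - 1))"
    using assms by (simp add: abs_mult power_abs summable_mult)
  then show ?thesis
    by (intro abs_convergent_prod_imp_convergent_prod summable_imp_abs_convergent_prod)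
qed

lemma qpoch_inf_rec:
  fixes a q :: real
  assumes "\<bar>q\<bar> < 1"
  shows "qpoch_inf a q = (1 - a) * qpoch_inf (a * q) q"
proof -
  have "(\<lambda>k. 1 - (a * q) * q ^ k) has_prod qpoch_inf (a * q) q"
    using convergent_prod_qpoch[OF assms] unfolding qpoch_inf_def by blast
  then have "(\<lambda>k. (\<lambda>k. 1 - a * q ^ k) (Suc k)) has_prod qpoch_inf (a * q) q"
    by (simp add: mult.assoc)
  from has_prod_Suc_imp[OF this]
  have "(\<lambda>k. 1 - a * q ^ k) has_prod (qpoch_inf (a * q) q * (1 - a))"
    by simp
  then show ?thesis
    unfolding qpoch_inf_def using has_prod_unique by (metis mult.commute)
qed

lemma qpoch_inf_power_Suc:
  fixes a q :: real
  assumes "\<bar>q\<bar> < 1"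
  shows "qpoch_inf (a * q ^ n) q = (1 - a * q ^ n) * qpoch_inf (a * q ^ Suc n) q"
  using qpoch_inf_rec[OF assms, of "a * q ^ n"] by (simp only: power_Suc2 mult.assoc)

lemma qpoch_inf_pos:
  fixes a q :: real
  assumes "0 < q" "q < 1" "0 \<le> a" "a < 1"
  shows "0 < qpoch_inf a q"
  unfolding qpoch_inf_def
proof (rule less_0_prodinf)
  show "convergent_prod (\<lambda>k. 1 - a * q ^ k)"
    using assms by (intro convergent_prod_qpoch) auto
  fix k
  have "a * q ^ k \<le> a" using assms by (simp add: mult_left_le power_le_one)
  then show "0 < 1 - a * q ^ k" using assms by auto
qed

lemma qpoch_inf_antimono:
  fixes a b q :: real
  assumes "0 < q" "q < 1" "0 \<le> a" "a \<le> b" "b < 1"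
  shows "qpoch_inf b q \<le> qpoch_inf a q"
  unfolding qpoch_inf_def
proof (rule prodinf_le)
  show "(\<lambda>k. 1 - b * q ^ k) has_prod (\<Prod>k. 1 - b * q ^ k)"
       "(\<lambda>k. 1 - a * q ^ k) has_prod (\<Prod>k. 1 - a * q ^ k)"
    using convergent_prod_qpoch[of q] assms by auto
  fix k
  have "b * q ^ k \<le> b" using assms by (simp add: mult_left_le power_le_one)
  moreover have "a * q ^ k \<le> b * q ^ k" using assms by (intro mult_right_mono) auto
  ultimately show "0 \<le> 1 - b * q ^ k \<and> 1 - b * q ^ k \<le> 1 - a * q ^ k"
    using assms by auto
qed

lemma one_minus_sum_le_prod_one_minus:
  fixes x :: "nat \<Rightarrow> real"
  assumes "\<And>i. 0 \<le> x i" "\<And>i. x i \<le> 1"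
  shows "1 - (\<Sum>i\<le>n. x i) \<le> (\<Prod>i\<le>n. 1 - x i)"
proof (induction n)
  case 0
  then show ?case by simp
next
  case (Suc n)
  let ?P = "\<Prod>i\<le>n. 1 - x i"
  have "?P \<le> 1" using assms by (intro prod_le_1) auto
  then have "x (Suc n) * ?P \<le> x (Suc n)"
    using assms(1) by (simp add: mult_left_le)
  then have "1 - (\<Sum>i\<le>Suc n. x i) \<le> ?P - x (Suc n) * ?P"
    using Suc.IH by simp
  also have "\<dots> = (\<Prod>i\<le>Suc n. 1 - x i)" by (simp add: algebra_simps)
  finally show ?case .
qed

lemma qpoch_inf_ge:
  fixes a q :: real
  assumes "0 < q" "q < 1" "0 \<le> a" "a \<le> 1"
  shows "1 - a / (1 - q) \<le> qpoch_inf a q"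
  unfolding qpoch_inf_def
proof (rule LIMSEQ_le_const[OF convergent_prod_LIMSEQ])
  show "convergent_prod (\<lambda>k. 1 - a * q ^ k)"
    using assms by (intro convergent_prod_qpoch) auto
  have "(\<lambda>i. a * q ^ i) sums (a * (1 / (1 - q)))"
    using assms by (intro sums_mult geometric_sums) auto
  then have geom: "(\<lambda>i. a * q ^ i) sums (a / (1 - q))" by simp
  have "1 - a / (1 - q) \<le> (\<Prod>i\<le>n. 1 - a * q ^ i)" for n
  proof -
    have "(\<Sum>i<Suc n. a * q ^ i) \<le> (\<Sum>i. a * q ^ i)"
      using geom assms by (intro sum_le_suminf) (auto simp: sums_iff)
    also have "\<dots> = a / (1 - q)" using geom by (rule sums_unique[symmetric])
    finally have "(\<Sum>i<Suc n. a * q ^ i) \<le> a / (1 - q)" .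
    moreover have "1 - (\<Sum>i\<le>n. a * q ^ i) \<le> (\<Prod>i\<le>n. 1 - a * q ^ i)"
      using assms by (intro one_minus_sum_le_prod_one_minus)
        (auto simp: mult_le_one power_le_one)
    ultimately show ?thesis by (simp add: lessThan_Suc_atMost)
  qed
  then show "\<exists>N. \<forall>n\<ge>N. 1 - a / (1 - q) \<le> (\<Prod>i\<le>n. 1 - a * q ^ i)" by blast
qed

lemma cfrac_tail_bounds:
  fixes b t :: "nat \<Rightarrow> real"
  assumes "\<And>j. 0 < t j" "\<And>j. 0 \<le> b j" "\<And>j. t j = 1 - b j / t (Suc j)"
  shows "t 0 \<le> cfrac b n \<and> cfrac b n - t 0 \<le> (\<Prod>j<n. b j / t (Suc j) ^ 2) * (1 - t n)"
  using assms
proof (induction n arbitrary: b t)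
  case 0
  have "0 \<le> b 0 / t 1" using "0.prems"(1)[of 1] "0.prems"(2)[of 0] by simp
  then show ?case using "0.prems"(3)[of 0] by simp
next
  case (Suc n)
  define s where "s = cfrac (\<lambda>i. b (Suc i)) n"
  define P where "P = (\<Prod>j<n. b (Suc j) / t (Suc (Suc j)) ^ 2) * (1 - t (Suc n))"
  have t1: "0 < t 1" and b0: "0 \<le> b 0" and t0: "t 0 = 1 - b 0 / t 1"
    using Suc.prems(1)[of 1] Suc.prems(2)[of 0] Suc.prems(3)[of 0] by simp_all
  have "t 1 \<le> s \<and> s - t 1 \<le> P"
    using Suc.IH[of "\<lambda>i. t (Suc i)" "\<lambda>i. b (Suc i)"] Suc.prems
    unfolding s_def P_def One_nat_def by blast
  then have IH: "t 1 \<le> s" "s - t 1 \<le> P" by simp_all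
  have s0: "0 < s" using IH t1 by linarith
  have cf: "cfrac b (Suc n) = 1 - b 0 / s" unfolding s_def by simp
  have "b 0 / s \<le> b 0 / t 1" using IH t1 b0 by (intro divide_left_mono) auto
  then have lower: "t 0 \<le> cfrac b (Suc n)" using cf t0 by linarith
  have "cfrac b (Suc n) - t 0 = b 0 * (s - t 1) / (t 1 * s)"
    unfolding cf t0 using s0 t1 by (simp add: field_simps)
  also have "\<dots> \<le> b 0 * (s - t 1) / (t 1 * t 1)"
    using IH s0 t1 b0 by (intro divide_left_mono mult_left_mono mult_nonneg_nonneg) auto
  also have "\<dots> \<le> b 0 * P / (t 1 * t 1)"
    using IH b0 t1 by (intro divide_right_mono mult_left_mono) auto
  also have "\<dots> = (\<Prod>j<Suc n. b j / t (Suc j) ^ 2) * (1 - t (Suc n))"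
    unfolding P_def prod.lessThan_Suc_shift by (simp add: power2_eq_square)
  finally show ?case using lower by simp
qed

lemma cfrac_tendsto_tail:
  fixes b t :: "nat \<Rightarrow> real"
  assumes "\<And>j. 0 < t j" "\<And>j. 0 \<le> b j" "\<And>j. t j = 1 - b j / t (Suc j)"
    and "(\<lambda>n. \<Prod>j<n. b j / t (Suc j) ^ 2) \<longlonglongrightarrow> 0"
  shows "cfrac b \<longlonglongrightarrow> t 0"
proof -
  have bounds: "t 0 \<le> cfrac b n \<and> cfrac b n \<le> t 0 + (\<Prod>j<n. b j / t (Suc j) ^ 2)" for n
  proof -
    have "0 \<le> (\<Prod>j<n. b j / t (Suc j) ^ 2)" using assms(2) by (simp add: prod_nonneg)
    then have "(\<Prod>j<n. b j / t (Suc j) ^ 2) * (1 - t n) \<le> (\<Prod>j<n. b j / t (Suc j) ^ 2)"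
      using assms(1)[of n] by (simp add: mult_left_le)
    then show ?thesis using cfrac_tail_bounds[of t b n, OF assms(1-3)] by linarith
  qed
  have "(\<lambda>n. t 0 + (\<Prod>j<n. b j / t (Suc j) ^ 2)) \<longlonglongrightarrow> t 0 + 0"
    by (rule tendsto_add[OF tendsto_const assms(4)])
  then have "(\<lambda>n. t 0 + (\<Prod>j<n. b j / t (Suc j) ^ 2)) \<longlonglongrightarrow> t 0" by simp
  then show ?thesis
    by (rule tendsto_sandwich[OF _ _ tendsto_const, rotated 2])
      (use bounds in \<open>auto intro: always_eventually\<close>)
qed

definition beta_den :: "real \<Rightarrow> real \<Rightarrow> nat \<Rightarrow> real" where
  "beta_den p q n = 1 + q - (1 + p) * q ^ n"

definition tail_value :: "real \<Rightarrow> real \<Rightarrow> nat \<Rightarrow> real" where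
  "tail_value p q k = q * Delta p q k / (beta_den p q (k + 1) * Delta p q (k + 1))"

definition beta_den_Delta_sq :: "real \<Rightarrow> real \<Rightarrow> nat \<Rightarrow> real" where
  "beta_den_Delta_sq p q n = beta_den p q n * Delta p q n ^ 2"

context
  fixes p q :: real
  assumes q0: "0 < q" and q1: "q < 1" and p0: "0 \<le> p" and p1: "p < 1"
begin

lemma abs_q_less_one: "\<bar>q\<bar> < 1"
  using q0 q1 by simp

lemma p_mult_power_less_one: "p * q ^ n < 1"
proof -
  have "p * q ^ n \<le> p" using p0 q0 q1 by (simp add: mult_left_le power_le_one)
  then show ?thesis using p1 by simp
qed

lemma Delta_pos: "0 < Delta p q n"
proof -
  define A where "A = qpoch_inf (p * q ^ Suc n) q"
  define B where "B = qpoch_inf (q ^ Suc n) q"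
  have A0: "0 < A"
    unfolding A_def using q0 q1 p0 p_mult_power_less_one[of "Suc n"] by (intro qpoch_inf_pos) auto
  have "q ^ Suc n < 1" using q0 q1 by (rule power_Suc_less_one)
  then have "B \<le> A"
    unfolding A_def B_def using q0 q1 p0 p1 by (intro qpoch_inf_antimono) (auto simp: mult_left_le_one_le)
  moreover have "0 \<le> 1 - q ^ n" using q0 q1 by (simp add: power_le_one)
  ultimately have "(1 - q ^ n) * B \<le> (1 - q ^ n) * A" by (rule mult_left_mono)
  moreover have "Delta p q n = (1 - p * q ^ n) * A - (1 - q ^ n) * B"
    unfolding Delta_def A_def B_def
    using qpoch_inf_power_Suc[OF abs_q_less_one, of p n] qpoch_inf_power_Suc[OF abs_q_less_one, of 1 n]
    by simp
  moreover have "0 < (1 - p) * q ^ n * A" using p1 q0 A0 by simp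
  ultimately show ?thesis by (simp add: algebra_simps)
qed

lemma Delta_0_eq: "Delta p q 0 = (1 - p) * (1 - p * q) * qpoch_inf (p * q ^ 2) q"
proof -
  have "qpoch_inf 1 q = 0" using qpoch_inf_rec[OF abs_q_less_one, of 1] by simp
  then show ?thesis
    unfolding Delta_def using qpoch_inf_power_Suc[OF abs_q_less_one, of p 0]
      qpoch_inf_power_Suc[OF abs_q_less_one, of p 1]
    by (simp add: power2_eq_square)
qed

lemma Delta_le: "Delta p q n \<le> q ^ n / (1 - q)"
proof -
  have "qpoch_inf (p * q ^ n) q \<le> qpoch_inf 0 q"
    using q0 q1 p0 p_mult_power_less_one by (intro qpoch_inf_antimono) auto
  also have "qpoch_inf 0 q = 1" unfolding qpoch_inf_def by simp
  finally have "qpoch_inf (p * q ^ n) q \<le> 1" .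
  moreover have "1 - q ^ n / (1 - q) \<le> qpoch_inf (q ^ n) q"
    using q0 q1 by (intro qpoch_inf_ge) (auto simp: power_le_one)
  ultimately show ?thesis unfolding Delta_def by linarith
qed

lemma beta_den_pos: "1 \<le> n \<Longrightarrow> 0 < beta_den p q n"
proof -
  assume "1 \<le> n"
  then have "q ^ n \<le> q" using q0 q1 power_decreasing[of 1 n q] by simp
  then have "(1 + p) * q ^ n \<le> (1 + p) * q" using p0 by (intro mult_left_mono) auto
  moreover have "p * q < 1" using p_mult_power_less_one[of 1] by simp
  ultimately show ?thesis unfolding beta_den_def by (simp add: algebra_simps)
qed

lemma beta_den_le: "beta_den p q n \<le> 1 + q"
  unfolding beta_den_def using p0 q0 by simp

lemma Delta_three_term_rec:
  "q * Delta p q n = beta_den p q (n + 1) * Delta p q (n + 1)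
     - (1 - q ^ (n + 1)) * (1 - p * q ^ (n + 1)) * Delta p q (n + 2)"
proof -
  define X where "X = q ^ n"
  define A where "A = qpoch_inf (p * q ^ Suc (Suc n)) q"
  define B where "B = qpoch_inf (q ^ Suc (Suc n)) q"
  note rec = qpoch_inf_power_Suc[OF abs_q_less_one]
  have Suc_X: "q ^ Suc n = q * X" "q ^ (n + 1) = q * X" unfolding X_def by simp_all
  have A1: "qpoch_inf (p * q ^ Suc n) q = (1 - p * (q * X)) * A"
    using rec[of p "Suc n"] unfolding A_def Suc_X by simp
  have B1: "qpoch_inf (q ^ Suc n) q = (1 - q * X) * B"
    using rec[of 1 "Suc n"] unfolding B_def Suc_X by simp
  have "Delta p q n = (1 - p * X) * ((1 - p * (q * X)) * A) - (1 - X) * ((1 - q * X) * B)"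
    unfolding Delta_def X_def using rec[of p n] rec[of 1 n] A1 B1 by (simp add: X_def)
  moreover have "Delta p q (n + 1) = (1 - p * (q * X)) * A - (1 - q * X) * B"
    unfolding Delta_def using A1 B1 by simp
  moreover have "Delta p q (n + 2) = A - B"
    unfolding Delta_def A_def B_def by (simp add: numeral_2_eq_2)
  moreover have "beta_den p q (n + 1) = 1 + q - (1 + p) * (q * X)"
    unfolding beta_den_def Suc_X by simp
  ultimately show ?thesis unfolding Suc_X by algebra
qed

lemma tail_value_pos: "0 < tail_value p q n"
  unfolding tail_value_def using Delta_pos[of n] Delta_pos[of "n + 1"] beta_den_pos[of "n + 1"] q0
  by simp

lemma tail_value_rec: "tail_value p q n = 1 - beta p q (n + 1) / tail_value p q (n + 1)"
proof -
  have Delta_nz: "Delta p q n \<noteq> 0" "Delta p q (n + 1) \<noteq> 0" "Delta p q (n + 2) \<noteq> 0"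
    using Delta_pos by (metis less_irrefl)+
  have den_nz: "beta_den p q (n + 1) \<noteq> 0" "beta_den p q (n + 2) \<noteq> 0"
    using beta_den_pos[of "n + 1"] beta_den_pos[of "n + 2"] by simp_all
  have "beta p q (n + 1) / tail_value p q (n + 1)
      = (1 - q ^ (n + 1)) * (1 - p * q ^ (n + 1)) * Delta p q (n + 2)
          / (beta_den p q (n + 1) * Delta p q (n + 1))"
  proof -
    have den_eq: "1 + q - (1 + p) * q ^ (n + 1) = beta_den p q (n + 1)"
      "1 + q - (1 + p) * q ^ (n + 1 + 1) = beta_den p q (n + 2)"
      unfolding beta_den_def by (simp_all add: numeral_2_eq_2)
    show ?thesis
      unfolding beta_def tail_value_def den_eq using Delta_nz den_nz q0
      by (simp add: field_simps numeral_2_eq_2)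
  qed
  also have "\<dots> = 1 - tail_value p q n"
    unfolding tail_value_def using Delta_three_term_rec[of n] Delta_nz den_nz
    by (simp add: field_simps)
  finally show ?thesis by simp
qed

lemma beta_nonneg: "1 \<le> m \<Longrightarrow> 0 \<le> beta p q m"
  unfolding beta_def beta_den_def[symmetric]
  using q0 q1 p_mult_power_less_one[of m] beta_den_pos[of m] beta_den_pos[of "m + 1"]
  by (intro divide_nonneg_pos mult_nonneg_nonneg mult_pos_pos) (auto simp: power_le_one)

lemma beta_den_Delta_sq_pos: "1 \<le> m \<Longrightarrow> 0 < beta_den_Delta_sq p q m"
  unfolding beta_den_Delta_sq_def using beta_den_pos[of m] Delta_pos[of m] by simp

lemma beta_den_Delta_sq_le: "beta_den_Delta_sq p q m \<le> (1 + q) / (1 - q) ^ 2 * (q ^ m) ^ 2"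
proof -
  have "beta_den_Delta_sq p q m \<le> (1 + q) * (q ^ m / (1 - q)) ^ 2"
    unfolding beta_den_Delta_sq_def using beta_den_le Delta_pos[of m] Delta_le[of m] q0
    by (intro mult_mono power_mono) auto
  then show ?thesis by (simp add: power_divide)
qed

lemma beta_div_tail_value_sq_le:
  assumes "1 \<le> m"
  shows "beta p q m / tail_value p q m ^ 2 \<le> beta_den_Delta_sq p q (m + 1) / (q * beta_den_Delta_sq p q m)"
proof -
  let ?r = "beta_den_Delta_sq p q (m + 1) / (q * beta_den_Delta_sq p q m)"
  have "beta p q m / tail_value p q m ^ 2 = (1 - q ^ m) * (1 - p * q ^ m) * ?r"
    unfolding beta_def beta_den_def[symmetric] tail_value_def beta_den_Delta_sq_def
    using Delta_pos[of m] Delta_pos[of "m + 1"] beta_den_pos[of m] beta_den_pos[of "m + 1"] assms q0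
    by (simp add: field_simps power2_eq_square)
  also have "\<dots> \<le> 1 * ?r"
  proof (rule mult_right_mono)
    show "(1 - q ^ m) * (1 - p * q ^ m) \<le> 1"
      using q0 q1 p0 p_mult_power_less_one[of m] by (intro mult_le_one) (auto simp: power_le_one)
    show "0 \<le> ?r"
      using beta_den_Delta_sq_pos[of m] beta_den_Delta_sq_pos[of "m + 1"] assms q0 by simp
  qed
  finally show ?thesis by simp
qed

lemma prod_beta_div_tail_value_sq_le:
  assumes "1 \<le> m"
  shows "(\<Prod>j<n. beta p q (m + j) / tail_value p q (m + j) ^ 2)
           \<le> beta_den_Delta_sq p q (m + n) / (q ^ n * beta_den_Delta_sq p q m)"
proof -
  have "(\<Prod>j<n. beta p q (m + j) / tail_value p q (m + j) ^ 2)
        \<le> (\<Prod>j<n. beta_den_Delta_sq p q (m + Suc j) / beta_den_Delta_sq p q (m + j) * (1 / q))"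
    using assms beta_nonneg beta_div_tail_value_sq_le
    by (intro prod_mono) (auto simp: field_simps)
  also have "\<dots> = (\<Prod>j<n. beta_den_Delta_sq p q (m + Suc j) / beta_den_Delta_sq p q (m + j)) * (1 / q) ^ n"
    unfolding prod.distrib prod_constant card_lessThan ..
  also have "\<dots> = beta_den_Delta_sq p q (m + n) / beta_den_Delta_sq p q m * (1 / q) ^ n"
    using prod_lessThan_telescope[of n "\<lambda>j. beta_den_Delta_sq p q (m + j)"] beta_den_Delta_sq_pos assms
    by (simp add: less_imp_neq[symmetric])
  finally show ?thesis by (simp add: power_one_over field_simps)
qed

lemma prod_beta_div_tail_value_sq_tendsto_zero:
  assumes "1 \<le> m"
  shows "(\<lambda>n. \<Prod>j<n. beta p q (m + j) / tail_value p q (m + j) ^ 2) \<longlonglongrightarrow> 0"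
proof (rule tendsto_sandwich[OF _ _ tendsto_const])
  define C where "C = (1 + q) / (1 - q) ^ 2 * (q ^ m) ^ 2 / beta_den_Delta_sq p q m"
  show "\<forall>\<^sub>F n in sequentially. 0 \<le> (\<Prod>j<n. beta p q (m + j) / tail_value p q (m + j) ^ 2)"
    using assms beta_nonneg by (intro always_eventually allI prod_nonneg) auto
  have "(\<Prod>j<n. beta p q (m + j) / tail_value p q (m + j) ^ 2) \<le> C * q ^ n" for n
  proof -
    have "beta_den_Delta_sq p q (m + n) / (q ^ n * beta_den_Delta_sq p q m)
          \<le> (1 + q) / (1 - q) ^ 2 * (q ^ (m + n)) ^ 2 / (q ^ n * beta_den_Delta_sq p q m)"
      using beta_den_Delta_sq_le beta_den_Delta_sq_pos[OF assms] q0 by (intro divide_right_mono) auto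
    also have "\<dots> = C * q ^ n"
    proof -
      have "(q ^ (m + n)) ^ 2 = (q ^ m) ^ 2 * q ^ n * q ^ n"
        by (simp add: power_add power2_eq_square)
      then show ?thesis unfolding C_def using q0 by simp
    qed
    finally show ?thesis using prod_beta_div_tail_value_sq_le[OF assms, of n] by linarith
  qed
  then show "\<forall>\<^sub>F n in sequentially. (\<Prod>j<n. beta p q (m + j) / tail_value p q (m + j) ^ 2) \<le> C * q ^ n"
    by (intro always_eventually allI)
  show "(\<lambda>n. C * q ^ n) \<longlonglongrightarrow> 0"
    using q0 q1 tendsto_mult_right_zero[OF LIMSEQ_power_zero[of q]] by simp
qed

lemma cfrac_beta_tendsto: "(\<lambda>n. cfrac (\<lambda>i. beta p q (k + 1 + i)) n) \<longlonglongrightarrow> tail_value p q k"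
proof -
  have "cfrac (\<lambda>i. beta p q (k + 1 + i)) \<longlonglongrightarrow> tail_value p q (k + 0)"
  proof (rule cfrac_tendsto_tail)
    fix j
    show "0 < tail_value p q (k + j)" by (rule tail_value_pos)
    show "0 \<le> beta p q (k + 1 + j)" by (rule beta_nonneg) simp
    show "tail_value p q (k + j) = 1 - beta p q (k + 1 + j) / tail_value p q (k + Suc j)"
      using tail_value_rec[of "k + j"] by (simp add: ac_simps)
  next
    show "(\<lambda>n. \<Prod>j<n. beta p q (k + 1 + j) / tail_value p q (k + Suc j) ^ 2) \<longlonglongrightarrow> 0"
      using prod_beta_div_tail_value_sq_tendsto_zero[of "k + 1"] by simp
  qed
  then show ?thesis by simp
qed

end

theorem theorem7:
  fixes p q :: real
  assumes "0 < q" "q < 1" "0 \<le> p" "p < 1"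
  shows "((\<lambda>n. cfrac (\<lambda>i. beta p q (i + 1)) n)
            \<longlonglongrightarrow> q / (1 - p * q) * Delta p q 0 / Delta p q 1)
       \<and> q / (1 - p * q) * Delta p q 0 / Delta p q 1
           = q * (1 - p) * qpoch_inf (p * q ^ 2) q / (qpoch_inf (p * q) q - qpoch_inf q q)
       \<and> (\<forall>k::nat. (\<lambda>n. cfrac (\<lambda>i. beta p q (k + 1 + i)) n)
           \<longlonglongrightarrow> q / (1 + q - (1 + p) * q ^ (k + 1)) * Delta p q k / Delta p q (k + 1))"
proof -
  have tails: "(\<lambda>n. cfrac (\<lambda>i. beta p q (k + 1 + i)) n)
      \<longlonglongrightarrow> q / (1 + q - (1 + p) * q ^ (k + 1)) * Delta p q k / Delta p q (k + 1)" for k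
    using cfrac_beta_tendsto[OF assms, of k] unfolding tail_value_def beta_den_def by simp
  have "1 + q - (1 + p) * q ^ (0 + 1) = 1 - p * q" by (simp add: algebra_simps)
  then have first: "(\<lambda>n. cfrac (\<lambda>i. beta p q (i + 1)) n)
      \<longlonglongrightarrow> q / (1 - p * q) * Delta p q 0 / Delta p q 1"
    using tails[of 0] by (simp only:) (simp add: add.commute)
  note Delta_0_eq[OF assms]
  moreover have "1 - p * q \<noteq> 0" using p_mult_power_less_one[OF assms, of 1] by simp
  ultimately have "q / (1 - p * q) * Delta p q 0 / Delta p q 1
      = q * (1 - p) * qpoch_inf (p * q ^ 2) q / (qpoch_inf (p * q) q - qpoch_inf q q)"
    unfolding Delta_def[of p q 1] by simp
  with first tails show ?thesis by blast
qed

end
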